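(* Let $d \geq 1$ be an integer, let $N > 1$ be a composite integer and let $R = \mathbb{Z}/N\mathbb{Z}$. Consider the coefficient-choosing game of degree $d$ over $R$, where Wanda wins if and only if the final polynomial has a root in $R$. Then the player who makes the last move has a winning strategy when (1) $d$ is even, or (2) $d > 1$ and $N$ is cube-free, or (3) $d > 3$ and $N = 16 N_2$ for some cube-free odd integer $N_2$. In all other cases, Wanda has a winning strategy, whether she moves first or second.
   Context: The coefficient-choosing game of degree $d$ over a commutative ring $R$ with unity: two players, Nora and Wanda, alternately choose coefficients of a polynomial $f(x) = a_d x^d + \cdots + a_1 x + a_0$. On each move the player whose turn it is picks one coefficient $a_i$ that has not yet been chosen and assigns it a value in $R$. The leading coefficient $a_d$ and the constant coefficient $a_0$ must be nonzero. The game ends when all $d+1$ coefficients are chosen. Wanda wins if $f$ has a root in the ring of fractions $\operatorname{Frac}(R)$, and Nora wins otherwise. For $R = \mathbb{Z}/N\mathbb{Z}$, $\operatorname{Frac}(R) = R$. Who moves first is fixed in advance, which determines who makes the last (i.e. the $(d+1)$-st) move. "The last player has a winning strategy" means that whichever of the two players makes the last move has a winning strategy. *)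

theory Defs
  imports "HOL-Computational_Algebra.Primes"
begin

text \<open>Elements of Z/NZ are represented by their canonical representatives 0..N-1.
  A game state is a partial assignment of the coefficients a_0..a_d
  (None = not yet chosen).\<close>

definition has_root_mod :: "nat \<Rightarrow> nat \<Rightarrow> (nat \<Rightarrow> nat) \<Rightarrow> bool" where
  "has_root_mod N d a \<longleftrightarrow> (\<exists>x\<in>{0..<N}. (\<Sum>i\<le>d. a i * x ^ i) mod N = 0)"

definition legal_move :: "nat \<Rightarrow> nat \<Rightarrow> (nat \<Rightarrow> nat option) \<Rightarrow> nat \<Rightarrow> nat \<Rightarrow> bool" where
  "legal_move N d c i v \<longleftrightarrow> i \<le> d \<and> c i = None \<and> v < N \<and> ((i = 0 \<or> i = d) \<longrightarrow> v \<noteq> 0)"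

text \<open>wanda_val N d k c w: with k moves remaining from state c, and w = True iff
  Wanda is to move, Wanda has a winning strategy.\<close>
fun wanda_val :: "nat \<Rightarrow> nat \<Rightarrow> nat \<Rightarrow> (nat \<Rightarrow> nat option) \<Rightarrow> bool \<Rightarrow> bool" where
  "wanda_val N d 0 c w = has_root_mod N d (\<lambda>i. the (c i))"
| "wanda_val N d (Suc k) c w =
     (if w then (\<exists>i v. legal_move N d c i v \<and> wanda_val N d k (c(i := Some v)) False)
      else (\<forall>i v. legal_move N d c i v \<longrightarrow> wanda_val N d k (c(i := Some v)) True))"

fun nora_val :: "nat \<Rightarrow> nat \<Rightarrow> nat \<Rightarrow> (nat \<Rightarrow> nat option) \<Rightarrow> bool \<Rightarrow> bool" where
  "nora_val N d 0 c w = (\<not> has_root_mod N d (\<lambda>i. the (c i)))"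
| "nora_val N d (Suc k) c w =
     (if w then (\<forall>i v. legal_move N d c i v \<longrightarrow> nora_val N d k (c(i := Some v)) False)
      else (\<exists>i v. legal_move N d c i v \<and> nora_val N d k (c(i := Some v)) True))"

definition wanda_wins :: "nat \<Rightarrow> nat \<Rightarrow> bool \<Rightarrow> bool" where
  "wanda_wins N d wanda_first = wanda_val N d (d + 1) (\<lambda>_. None) wanda_first"

definition nora_wins :: "nat \<Rightarrow> nat \<Rightarrow> bool \<Rightarrow> bool" where
  "nora_wins N d wanda_first = nora_val N d (d + 1) (\<lambda>_. None) wanda_first"

text \<open>Wanda makes the last, (d+1)-st move iff (Wanda first and d even) or (Nora first and d odd).\<close>
definition last_player_wins :: "nat \<Rightarrow> nat \<Rightarrow> bool \<Rightarrow> bool" where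
  "last_player_wins N d wanda_first =
     (if wanda_first = even d then wanda_wins N d wanda_first else nora_wins N d wanda_first)"

definition cube_free :: "nat \<Rightarrow> bool" where
  "cube_free n \<longleftrightarrow> (\<forall>m. m ^ 3 dvd n \<longrightarrow> m = 1)"

end

theory Submission
  imports Defs "HOL-Number_Theory.Cong"
begin

type_synonym state = "nat \<Rightarrow> nat option"

definition completes :: "state \<Rightarrow> (nat \<Rightarrow> nat) \<Rightarrow> bool" where
  "completes c a \<longleftrightarrow> (\<forall>i v. c i = Some v \<longrightarrow> a i = v)"

definition free_coeffs :: "nat \<Rightarrow> state \<Rightarrow> nat set" where
  "free_coeffs d c = {i. i \<le> d \<and> c i = None}"

definition eval_int :: "(nat \<Rightarrow> nat) \<Rightarrow> nat \<Rightarrow> int \<Rightarrow> int" where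
  "eval_int a d x = (\<Sum>i\<le>d. int (a i) * x ^ i)"

lemma finite_free_coeffs [simp]: "finite (free_coeffs d c)"
  unfolding free_coeffs_def by (rule finite_subset[of _ "{..d}"]) auto

lemma free_coeffs_start [simp]: "free_coeffs d (\<lambda>_. None) = {..d}"
  unfolding free_coeffs_def by auto

lemma legal_move_free: "legal_move N d c i v \<Longrightarrow> i \<in> free_coeffs d c"
  unfolding legal_move_def free_coeffs_def by auto

lemma free_coeffs_move: "i \<in> free_coeffs d c \<Longrightarrow> free_coeffs d (c(i := Some v)) = free_coeffs d c - {i}"
  unfolding free_coeffs_def by auto

lemma card_free_coeffs_move:
  "legal_move N d c i v \<Longrightarrow> card (free_coeffs d (c(i := Some v))) = card (free_coeffs d c) - 1"
  by (simp add: free_coeffs_move legal_move_free)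

lemma completes_move: "c i = None \<Longrightarrow> completes (c(i := Some v)) a \<Longrightarrow> completes c a"
  unfolding completes_def by (metis fun_upd_other option.distinct(1))

lemma completes_the: "completes c (\<lambda>i. the (c i))"
  unfolding completes_def by auto

lemma wanda_val_moveI:
  "legal_move N d c i v \<Longrightarrow> wanda_val N d k (c(i := Some v)) False \<Longrightarrow> wanda_val N d (Suc k) c True"
  by auto

lemma wanda_val_replyI:
  "(\<And>i v. legal_move N d c i v \<Longrightarrow> wanda_val N d k (c(i := Some v)) True) \<Longrightarrow> wanda_val N d (Suc k) c False"
  by auto

lemma nora_val_moveI:
  "legal_move N d c i v \<Longrightarrow> nora_val N d k (c(i := Some v)) True \<Longrightarrow> nora_val N d (Suc k) c False"
  by auto

lemma nora_val_replyI:
  "(\<And>i v. legal_move N d c i v \<Longrightarrow> nora_val N d k (c(i := Some v)) False) \<Longrightarrow> nora_val N d (Suc k) c True"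
  by auto

lemma legal_move_one: "N > 1 \<Longrightarrow> i \<in> free_coeffs d c \<Longrightarrow> legal_move N d c i 1"
  unfolding legal_move_def free_coeffs_def by auto

subsection \<open>Evaluation over the integers\<close>

lemma eval_int_cong: "[x = y] (mod m) \<Longrightarrow> [eval_int a d x = eval_int a d y] (mod m)"
  unfolding eval_int_def by (intro cong_sum cong_mult cong_pow cong_refl) auto

lemma eval_int_0 [simp]: "eval_int a d 0 = int (a 0)"
  unfolding eval_int_def by (induction d) auto

lemma eval_int_1: "eval_int a d 1 = int (\<Sum>i\<le>d. a i)"
  unfolding eval_int_def by simp

lemma eval_int_of_nat: "eval_int a d (int x) = int (\<Sum>i\<le>d. a i * x ^ i)"
  unfolding eval_int_def by simp

lemma has_root_mod_iff_dvd_eval_int: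
  assumes "N > 0"
  shows "has_root_mod N d a \<longleftrightarrow> (\<exists>x. int N dvd eval_int a d x)"
proof
  assume "has_root_mod N d a"
  then obtain x where "N dvd (\<Sum>i\<le>d. a i * x ^ i)"
    unfolding has_root_mod_def by auto
  then have "int N dvd eval_int a d (int x)"
    by (simp only: eval_int_of_nat of_nat_dvd_iff)
  then show "\<exists>x. int N dvd eval_int a d x" ..
next
  assume "\<exists>x. int N dvd eval_int a d x"
  then obtain x where x: "int N dvd eval_int a d x" ..
  define y where "y = nat (x mod int N)"
  have "[x = int y] (mod int N)"
    using assms by (simp add: y_def cong_def)
  then have "int N dvd eval_int a d (int y)"
    using x eval_int_cong cong_dvd_iff by blast
  then have "N dvd (\<Sum>i\<le>d. a i * y ^ i)"
    by (simp only: eval_int_of_nat of_nat_dvd_iff)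
  moreover have "y < N"
    using assms by (simp add: y_def nat_less_iff)
  ultimately show "has_root_mod N d a"
    unfolding has_root_mod_def by (auto simp: dvd_eq_mod_eq_0)
qed

lemma eval_int_cong_prefix:
  assumes "m \<le> Suc d" "M dvd x ^ m"
  shows "[eval_int a d x = (\<Sum>i<m. int (a i) * x ^ i)] (mod M)"
proof -
  have split: "{..d} = {..<m} \<union> {m..d}"
    using assms(1) by auto
  have "M dvd int (a i) * x ^ i" if "i \<in> {m..d}" for i
  proof -
    have "x ^ i = x ^ m * x ^ (i - m)"
      using that by (simp flip: power_add)
    then show ?thesis
      using assms(2) by simp
  qed
  then have "M dvd (\<Sum>i\<in>{m..d}. int (a i) * x ^ i)"
    by (rule dvd_sum)
  then show ?thesis
    unfolding eval_int_def split
    by (subst sum.union_disjoint) (auto simp: cong_def)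
qed

lemma has_root_mod_if_prefix:
  assumes "N > 0" "m \<le> Suc d" "int N dvd X ^ m" "int N dvd (\<Sum>i<m. int (a i) * X ^ i)"
  shows "has_root_mod N d a"
proof -
  have "int N dvd eval_int a d X"
    using eval_int_cong_prefix[OF assms(2,3)] assms(4) cong_dvd_iff by blast
  then show ?thesis
    using has_root_mod_iff_dvd_eval_int[OF assms(1)] by blast
qed

lemma sum_lessThan_2: "(\<Sum>i<2. g i) = g 0 + g 1" for g :: "nat \<Rightarrow> int"
  by (simp add: numeral_2_eq_2)

lemma sum_lessThan_3: "(\<Sum>i<3. g i) = g 0 + g 1 + g 2" for g :: "nat \<Rightarrow> int"
  by (simp add: numeral_3_eq_3 numeral_2_eq_2)

lemma sum_lessThan_4: "(\<Sum>i<4. g i) = g 0 + g 1 + g 2 + g 3" for g :: "nat \<Rightarrow> int"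
  by (simp add: numeral_eq_Suc)

lemma has_root_mod_linear_prefix:
  assumes "N > 0" "d \<ge> 1" "int N dvd X ^ 2" "int N dvd int (a 0) + int (a 1) * X"
  shows "has_root_mod N d a"
  using assms by (intro has_root_mod_if_prefix[of N 2 d X]) (simp_all only: sum_lessThan_2 power_0 power_one_right mult_1_right)

lemma has_root_mod_quadratic_prefix:
  assumes "N > 0" "d \<ge> 2" "int N dvd X ^ 3"
    "int N dvd int (a 0) + int (a 1) * X + int (a 2) * X ^ 2"
  shows "has_root_mod N d a"
  using assms by (intro has_root_mod_if_prefix[of N 3 d X]) (simp_all only: sum_lessThan_3 power_0 power_one_right mult_1_right)

lemma has_root_mod_cubic_prefix:
  assumes "N > 0" "d \<ge> 3" "int N dvd X ^ 4"
    "int N dvd int (a 0) + int (a 1) * X + int (a 2) * X ^ 2 + int (a 3) * X ^ 3"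
  shows "has_root_mod N d a"
  using assms by (intro has_root_mod_if_prefix[of N 4 d X]) (simp_all only: sum_lessThan_4 power_0 power_one_right mult_1_right)

lemma eval_int_cubic: "eval_int a 3 x = int (a 0) + int (a 1) * x + int (a 2) * x ^ 2 + int (a 3) * x ^ 3"
proof -
  have "{..3::nat} = {..<4}"
    by auto
  then show ?thesis
    unfolding eval_int_def by (simp add: sum_lessThan_4)
qed

lemma wanda_val_if_completions_have_root:
  assumes "N > 1" "card (free_coeffs d c) = k" "\<And>a. completes c a \<Longrightarrow> has_root_mod N d a"
  shows "wanda_val N d k c w"
  using assms(2,3)
proof (induction k arbitrary: c w)
  case 0
  then show ?case
    using completes_the by simp
next
  case (Suc k c w)
  have next_state: "wanda_val N d k (c(i := Some v)) w'" if move: "legal_move N d c i v" for i v w'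
  proof (rule Suc.IH)
    show "card (free_coeffs d (c(i := Some v))) = k"
      using Suc.prems(1) card_free_coeffs_move[OF move] by simp
    have "c i = None"
      using move unfolding legal_move_def by simp
    then show "has_root_mod N d a" if "completes (c(i := Some v)) a" for a
      using Suc.prems(2) completes_move that by blast
  qed
  have "free_coeffs d c \<noteq> {}"
    using Suc.prems(1) by auto
  then obtain i where "i \<in> free_coeffs d c"
    by blast
  with assms(1) have "legal_move N d c i 1"
    by (rule legal_move_one)
  then show ?case
    using next_state by (cases w) (simp_all only: wanda_val_moveI wanda_val_replyI)
qed

definition mirror_balanced :: "nat \<Rightarrow> nat \<Rightarrow> state \<Rightarrow> bool" where
  "mirror_balanced N d c \<longleftrightarrow>
     (\<forall>i \<in> free_coeffs d c. d - i \<in> free_coeffs d c \<and> d - i \<noteq> i) \<and>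
     N dvd (\<Sum>i \<in> {..d} - free_coeffs d c. the (c i))"

lemma mirror_reply_legal:
  assumes bal: "mirror_balanced N d c" and move: "legal_move N d c i v"
  shows "legal_move N d (c(i := Some v)) (d - i) ((N - v) mod N)"
proof -
  have "d - i \<in> free_coeffs d c" "d - i \<noteq> i"
    using bal legal_move_free[OF move] unfolding mirror_balanced_def by auto
  moreover have "(N - v) mod N \<noteq> 0" if "d - i = 0 \<or> d - i = d"
  proof -
    have "i = 0 \<or> i = d"
      using that move unfolding legal_move_def by auto
    then have "0 < v" "v < N"
      using move unfolding legal_move_def by auto
    then show ?thesis
      by simp
  qed
  moreover have "N > 0"
    using move unfolding legal_move_def by auto
  ultimately show ?thesis
    unfolding legal_move_def free_coeffs_def by auto
qed

lemma mirror_balanced_reply: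
  assumes bal: "mirror_balanced N d c" and move: "legal_move N d c i v"
  shows "mirror_balanced N d (c(i := Some v, d - i := Some ((N - v) mod N)))"
    (is "mirror_balanced N d ?c'")
proof -
  define u where "u = (N - v) mod N"
  have i: "i \<in> free_coeffs d c" "i \<le> d"
    using legal_move_free[OF move] by (auto simp: free_coeffs_def)
  have j: "d - i \<in> free_coeffs d c" "d - i \<noteq> i"
    using bal i unfolding mirror_balanced_def by auto
  have free': "free_coeffs d ?c' = free_coeffs d c - {i, d - i}"
    unfolding free_coeffs_def by auto
  have sym: "d - k \<in> free_coeffs d ?c' \<and> d - k \<noteq> k" if "k \<in> free_coeffs d ?c'" for k
    using that bal i unfolding free' mirror_balanced_def by (auto simp: free_coeffs_def)
  have chosen': "{..d} - free_coeffs d ?c' = insert i (insert (d - i) ({..d} - free_coeffs d c))"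
    using i j unfolding free' by (auto simp: free_coeffs_def)
  have "(\<Sum>k \<in> {..d} - free_coeffs d c. the (?c' k)) = (\<Sum>k \<in> {..d} - free_coeffs d c. the (c k))"
    using i j by (intro sum.cong) auto
  then have "(\<Sum>k \<in> {..d} - free_coeffs d ?c'. the (?c' k)) =
      v + u + (\<Sum>k \<in> {..d} - free_coeffs d c. the (c k))"
    using i j unfolding chosen' u_def by simp
  moreover have "N dvd v + u"
    using move unfolding u_def legal_move_def by (cases "v = 0") auto
  ultimately show ?thesis
    using bal sym unfolding mirror_balanced_def u_def by auto
qed

lemma has_root_mod_if_dvd_coeff_sum:
  assumes "N > 1" "N dvd (\<Sum>i\<le>d. a i)"
  shows "has_root_mod N d a"
  using assms unfolding has_root_mod_def by (intro bexI[of _ 1]) (simp_all add: dvd_eq_mod_eq_0)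

lemma wanda_val_mirror:
  assumes "N > 1" "mirror_balanced N d c" "card (free_coeffs d c) = 2 * m"
  shows "wanda_val N d (2 * m) c False"
  using assms(2,3)
proof (induction m arbitrary: c)
  case 0
  then have "N dvd (\<Sum>i\<le>d. the (c i))"
    unfolding mirror_balanced_def by simp
  then show ?case
    using assms(1) has_root_mod_if_dvd_coeff_sum by simp
next
  case (Suc m c)
  have "wanda_val N d (Suc (2 * m)) (c(i := Some v)) True" if move: "legal_move N d c i v" for i v
  proof -
    note reply = mirror_reply_legal[OF Suc.prems(1) move]
    have "card (free_coeffs d (c(i := Some v, d - i := Some ((N - v) mod N)))) = 2 * m"
      using Suc.prems(2) card_free_coeffs_move[OF move] card_free_coeffs_move[OF reply] by simp
    then have "wanda_val N d (2 * m) (c(i := Some v, d - i := Some ((N - v) mod N))) False"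
      using Suc.IH mirror_balanced_reply[OF Suc.prems(1) move] by blast
    then show ?thesis
      by (rule wanda_val_moveI[OF reply])
  qed
  then have "wanda_val N d (Suc (Suc (2 * m))) c False"
    by (rule wanda_val_replyI)
  then show ?case
    by simp
qed

lemma wanda_wins_second_odd:
  assumes "N > 1" "odd d"
  shows "wanda_wins N d False"
proof -
  have "mirror_balanced N d (\<lambda>_. None)"
    using assms(2) unfolding mirror_balanced_def by auto presburger
  moreover have "card (free_coeffs d (\<lambda>_. None)) = 2 * ((d + 1) div 2)"
    using assms(2) by simp
  ultimately have "wanda_val N d (2 * ((d + 1) div 2)) (\<lambda>_. None) False"
    using assms(1) wanda_val_mirror by blast
  then show ?thesis
    unfolding wanda_wins_def using assms(2) by simp
qed

lemma wanda_wins_first_even: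
  assumes "N > 1" "even d" "d \<ge> 2"
  shows "wanda_wins N d True"
proof -
  let ?c = "(\<lambda>_. None)(d div 2 := Some 0)"
  have move: "legal_move N d (\<lambda>_. None) (d div 2) 0"
    using assms unfolding legal_move_def by auto
  have free: "free_coeffs d ?c = {..d} - {d div 2}"
    unfolding free_coeffs_def by auto
  have "d - i \<noteq> d div 2 \<and> d - i \<noteq> i" if "i \<le> d" "i \<noteq> d div 2" for i
    using assms(2) that by (auto elim!: evenE)
  moreover have "{..d} - ({..d} - {d div 2}) = {d div 2}"
    by auto
  ultimately have "mirror_balanced N d ?c"
    unfolding mirror_balanced_def free by auto
  moreover have "card (free_coeffs d ?c) = 2 * (d div 2)"
    using card_free_coeffs_move[OF move] assms(2) by simp
  ultimately have "wanda_val N d (2 * (d div 2)) ?c False"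
    using assms(1) wanda_val_mirror by blast
  then have "wanda_val N d (Suc d) (\<lambda>_. None) True"
    using assms(2) by (intro wanda_val_moveI[OF move]) simp
  then show ?thesis
    unfolding wanda_wins_def by simp
qed

definition no_root_at_multiples :: "nat \<Rightarrow> nat \<Rightarrow> nat \<Rightarrow> state \<Rightarrow> bool" where
  "no_root_at_multiples N d p c \<longleftrightarrow>
     (\<forall>a x. completes c a \<longrightarrow> int p dvd x \<longrightarrow> \<not> int N dvd eval_int a d x)"

lemma no_root_at_multiples_move:
  "c i = None \<Longrightarrow> no_root_at_multiples N d p c \<Longrightarrow> no_root_at_multiples N d p (c(i := Some v))"
  unfolding no_root_at_multiples_def using completes_move by blast

lemma no_root_at_multiples_const_chosen:
  assumes "no_root_at_multiples N d p c"
  shows "c 0 \<noteq> None"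
proof
  assume "c 0 = None"
  then have "completes c ((\<lambda>i. the (c i))(0 := 0))"
    unfolding completes_def by auto
  then show False
    using assms unfolding no_root_at_multiples_def by (metis dvd_0_right eval_int_0 fun_upd_same of_nat_0)
qed

lemma exists_coeff_avoiding_unit_roots:
  fixes S :: "nat \<Rightarrow> int"
  assumes p: "prime p"
  shows "\<exists>r<p. \<forall>x\<in>{1..<p}. \<not> int p dvd int r * int x ^ j + S x"
proof (rule ccontr)
  assume "\<not> ?thesis"
  then have "\<forall>r\<in>{..<p}. \<exists>x. x \<in> {1..<p} \<and> int p dvd int r * int x ^ j + S x"
    by blast
  then have "\<exists>g. \<forall>r\<in>{..<p}. g r \<in> {1..<p} \<and> int p dvd int r * int (g r) ^ j + S (g r)"
    by (rule bchoice)
  then obtain g where g: "\<forall>r\<in>{..<p}. g r \<in> {1..<p} \<and> int p dvd int r * int (g r) ^ j + S (g r)"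
    by blast
  have "inj_on g {..<p}"
  proof (rule inj_onI)
    fix r1 r2
    assume r: "r1 \<in> {..<p}" "r2 \<in> {..<p}" "g r1 = g r2"
    have x: "g r1 \<in> {1..<p}" "int p dvd int r1 * int (g r1) ^ j + S (g r1)"
      using g r(1) by blast+
    have "int p dvd int r2 * int (g r1) ^ j + S (g r1)"
      using g r(2) unfolding r(3) by blast
    with x(2) have "int p dvd (int r1 * int (g r1) ^ j + S (g r1)) - (int r2 * int (g r1) ^ j + S (g r1))"
      by (rule dvd_diff)
    then have "int p dvd (int r1 - int r2) * int (g r1) ^ j"
      by (simp add: algebra_simps)
    moreover have "\<not> int p dvd int (g r1) ^ j"
    proof
      assume "int p dvd int (g r1) ^ j"
      then have "p dvd g r1"
        using p prime_dvd_power_iff[of "int p"] by (cases "j = 0") auto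
      then show False
        using x(1) by (auto dest: dvd_imp_le)
    qed
    ultimately have dvd: "int p dvd int r1 - int r2"
      using p prime_dvd_mult_iff[of "int p"] by auto
    show "r1 = r2"
    proof (rule ccontr)
      assume "r1 \<noteq> r2"
      then have "int p \<le> \<bar>int r1 - int r2\<bar>"
        using dvd_imp_le_int[OF _ dvd] by simp
      then show False
        using r(1,2) by auto
    qed
  qed
  then have "card {..<p} \<le> card {1..<p}"
    by (rule card_inj_on_le) (use g in auto)
  then show False
    using prime_gt_0_nat[OF p] by simp
qed

lemma eval_int_remove:
  "j \<le> d \<Longrightarrow> eval_int a d x = int (a j) * x ^ j + (\<Sum>i\<in>{..d} - {j}. int (a i) * x ^ i)"
  unfolding eval_int_def by (subst sum.remove[of "{..d}" j]) auto

lemma nora_last_move_avoids_roots: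
  assumes p: "prime p" "p dvd N" "p < N" and free: "free_coeffs d c = {j}"
    and no_root: "no_root_at_multiples N d p c"
  shows "\<exists>v. legal_move N d c j v \<and> \<not> has_root_mod N d (\<lambda>i. the ((c(j := Some v)) i))"
proof -
  have j: "j \<le> d" "c j = None"
    using free unfolding free_coeffs_def by auto
  have "j \<noteq> 0"
    using no_root_at_multiples_const_chosen[OF no_root] j(2) by metis
  define S where "S y = (\<Sum>i\<in>{..d} - {j}. int (the (c i)) * y ^ i)" for y :: int
  obtain r where r: "r < p" "\<forall>y\<in>{1..<p}. \<not> int p dvd int r * int y ^ j + S (int y)"
    using exists_coeff_avoiding_unit_roots[OF p(1), of j "\<lambda>y. S (int y)"] by blast
  \<comment> \<open>A zero leading coefficient is illegal; \<open>p\<close> has the same residue mod \<open>p\<close>.\<close>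
  define v where "v = (if r = 0 \<and> j = d then p else r)"
  have move: "legal_move N d c j v"
    unfolding legal_move_def v_def using j \<open>j \<noteq> 0\<close> r p(3) by auto
  define a where "a i = the ((c(j := Some v)) i)" for i
  have "completes c a"
    unfolding completes_def a_def using j by auto
  have eval: "eval_int a d x = int v * x ^ j + S x" for x
  proof -
    have "(\<Sum>i\<in>{..d} - {j}. int (a i) * x ^ i) = S x"
      unfolding S_def a_def by (intro sum.cong) auto
    moreover have "a j = v"
      unfolding a_def by simp
    ultimately show ?thesis
      using eval_int_remove[OF j(1), of a x] by simp
  qed
  have "\<not> int p dvd eval_int a d x" if "\<not> int p dvd x" for x
  proof
    assume dvd: "int p dvd eval_int a d x"
    define y where "y = nat (x mod int p)"
    have p0: "int p > 0"
      using prime_gt_0_nat[OF p(1)] by simp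
    have "x mod int p \<noteq> 0"
      using that by (simp add: dvd_eq_mod_eq_0)
    moreover have "0 \<le> x mod int p" "x mod int p < int p"
      using p0 by simp_all
    ultimately have "int y = x mod int p" "y \<in> {1..<p}"
      unfolding y_def by auto
    then have y: "y \<in> {1..<p}" "[x = int y] (mod int p)"
      by (simp_all add: cong_def)
    have "[int v = int r] (mod int p)"
      unfolding v_def by (auto simp: cong_def)
    moreover have "[S x = S (int y)] (mod int p)"
      unfolding S_def by (intro cong_sum cong_mult cong_pow cong_refl y(2))
    ultimately have "[eval_int a d x = int r * int y ^ j + S (int y)] (mod int p)"
      unfolding eval by (intro cong_add cong_mult cong_pow y(2))
    then show False
      using dvd r(2) y(1) cong_dvd_iff by blast
  qed
  then have "\<not> int N dvd eval_int a d x" for x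
    using no_root \<open>completes c a\<close> p(2) unfolding no_root_at_multiples_def
    by (meson dvd_trans of_nat_dvd_iff)
  then have "\<not> has_root_mod N d a"
    using has_root_mod_iff_dvd_eval_int p(3) by auto
  then show ?thesis
    using move unfolding a_def by blast
qed

lemma nora_val_if_no_root_at_multiples:
  assumes p: "prime p" "p dvd N" "p < N"
    and "card (free_coeffs d c) = k" "k \<ge> 1" "w = even k" "no_root_at_multiples N d p c"
  shows "nora_val N d k c w"
  using assms(4-7)
proof (induction k arbitrary: c w)
  case 0
  then show ?case
    by simp
next
  case (Suc k c w)
  have next_state: "card (free_coeffs d (c(i := Some v))) = k"
    "no_root_at_multiples N d p (c(i := Some v))" if "legal_move N d c i v" for i v
    using Suc.prems(1,4) card_free_coeffs_move[OF that] no_root_at_multiples_move that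
    unfolding legal_move_def by auto
  show ?case
  proof (cases w)
    case True
    then have "k \<ge> 1" "False = even k"
      using Suc.prems(3) by auto presburger
    then have "nora_val N d k (c(i := Some v)) False" if "legal_move N d c i v" for i v
      using Suc.IH next_state[OF that] by blast
    then show ?thesis
      using True by (auto intro: nora_val_replyI)
  next
    case False
    show ?thesis
    proof (cases "k = 0")
      case True
      then obtain j where "free_coeffs d c = {j}"
        using Suc.prems(1) card_1_singletonE by auto
      then obtain v where "legal_move N d c j v" "\<not> has_root_mod N d (\<lambda>i. the ((c(j := Some v)) i))"
        using nora_last_move_avoids_roots[OF p] Suc.prems(4) by blast
      then show ?thesis
        using True False by (auto intro: nora_val_moveI)
    next
      case k: False
      have "free_coeffs d c \<noteq> {}"
        using Suc.prems(1) by auto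
      then obtain i where "i \<in> free_coeffs d c"
        by blast
      with p have move: "legal_move N d c i 1"
        by (intro legal_move_one) (auto dest: prime_gt_1_nat)
      have "True = even k"
        using Suc.prems(3) False by simp
      then have "nora_val N d k (c(i := Some 1)) True"
        using Suc.IH next_state[OF move] k by simp
      then show ?thesis
        using nora_val_moveI[OF move] False by simp
    qed
  qed
qed

lemma no_root_at_multiples_if_const:
  assumes "c 0 = Some A" "\<not> p dvd A" "p dvd N"
  shows "no_root_at_multiples N d p c"
  unfolding no_root_at_multiples_def
proof (intro allI impI notI)
  fix a x
  assume "completes c a" "int p dvd x" "int N dvd eval_int a d x"
  have "[eval_int a d x = eval_int a d 0] (mod int p)"
    using \<open>int p dvd x\<close> by (intro eval_int_cong) (simp add: cong_0_iff)
  moreover have "int p dvd eval_int a d x"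
    using \<open>int N dvd eval_int a d x\<close> assms(3) by (meson dvd_trans of_nat_dvd_iff)
  ultimately have "int p dvd int (a 0)"
    using cong_dvd_iff by fastforce
  then show False
    using \<open>completes c a\<close> assms(1,2) unfolding completes_def by simp
qed

lemma no_root_at_multiples_if_const_square:
  assumes "c 0 = Some A" "c 1 = Some 0" "q ^ 2 dvd N" "\<not> q ^ 2 dvd A" "d \<ge> 1"
  shows "no_root_at_multiples N d q c"
  unfolding no_root_at_multiples_def
proof (intro allI impI notI)
  fix a x
  assume a: "completes c a" and "int q dvd x" "int N dvd eval_int a d x"
  have "int q ^ 2 dvd x ^ 2"
    using \<open>int q dvd x\<close> by (rule dvd_power_same)
  then have "[eval_int a d x = (\<Sum>i<2. int (a i) * x ^ i)] (mod int q ^ 2)"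
    using assms(5) by (intro eval_int_cong_prefix) auto
  moreover have "a 0 = A" "a 1 = 0"
    using a assms(1,2) unfolding completes_def by auto
  ultimately have "[eval_int a d x = int A] (mod int q ^ 2)"
    by (simp add: sum_lessThan_2)
  moreover have "int q ^ 2 dvd eval_int a d x"
    using \<open>int N dvd eval_int a d x\<close> assms(3) by (metis dvd_trans of_nat_dvd_iff of_nat_power)
  ultimately have "int (q ^ 2) dvd int A"
    using cong_dvd_iff by fastforce
  then show False
    using assms(4) by (simp only: of_nat_dvd_iff)
qed

lemma sixteen_dvd_cubic_at_even:
  fixes A b c y :: int
  assumes "16 dvd A + b * (2 * y) ^ 2 + c * (2 * y) ^ 3"
  shows "16 dvd A \<or> 16 dvd A + 4 * b + 8 * c"
proof (cases "even y")
  case True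
  then obtain z where "y = 2 * z"
    by blast
  then have "A + b * (2 * y) ^ 2 + c * (2 * y) ^ 3 = A + 16 * (b * z ^ 2 + 4 * c * z ^ 3)"
    by (simp add: algebra_simps power_mult_distrib)
  then show ?thesis
    using assms by (metis dvd_add_left_iff dvd_triv_left)
next
  case False
  then obtain z where "y = 2 * z + 1"
    using oddE by blast
  then have "A + b * (2 * y) ^ 2 + c * (2 * y) ^ 3 =
      (A + 4 * b + 8 * c) + 16 * (b * (z ^ 2 + z) + c * (4 * z ^ 3 + 6 * z ^ 2 + 3 * z))"
    by (simp add: algebra_simps power2_eq_square power3_eq_cube)
  then show ?thesis
    using assms by (metis dvd_add_left_iff dvd_triv_left add.commute)
qed

lemma no_root_at_multiples_two:
  assumes "c 0 = Some A" "c 1 = Some 0" "16 dvd N" "\<not> 16 dvd A" "d \<ge> 3"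
    and obstruction: "\<And>a. completes c a \<Longrightarrow> \<not> (16::int) dvd int A + 4 * int (a 2) + 8 * int (a 3)"
  shows "no_root_at_multiples N d 2 c"
  unfolding no_root_at_multiples_def
proof (intro allI impI notI)
  fix a x
  assume a: "completes c a" and "int 2 dvd x" "int N dvd eval_int a d x"
  then obtain y where y: "x = 2 * y"
    by auto
  have "(16::int) dvd x ^ 4"
    using y by (simp add: power_mult_distrib)
  then have "[eval_int a d x = (\<Sum>i<4. int (a i) * x ^ i)] (mod 16)"
    using assms(5) by (intro eval_int_cong_prefix) auto
  moreover have "a 0 = A" "a 1 = 0"
    using a assms(1,2) unfolding completes_def by auto
  ultimately have "[eval_int a d x = int A + int (a 2) * x ^ 2 + int (a 3) * x ^ 3] (mod 16)"
    by (simp add: sum_lessThan_4)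
  moreover have "(16::int) dvd eval_int a d x"
    using \<open>int N dvd eval_int a d x\<close> assms(3) by (metis dvd_trans of_nat_dvd_iff of_nat_numeral)
  ultimately have "(16::int) dvd int A + int (a 2) * (2 * y) ^ 2 + int (a 3) * (2 * y) ^ 3"
    using cong_dvd_iff y by blast
  then have "(16::int) dvd int A \<or> (16::int) dvd int A + 4 * int (a 2) + 8 * int (a 3)"
    by (rule sixteen_dvd_cubic_at_even)
  moreover have "\<not> (16::int) dvd int A"
    using assms(4) by (metis of_nat_dvd_iff of_nat_numeral)
  ultimately show False
    using obstruction[OF a] by blast
qed

lemma prime_factor_less:
  fixes q N :: nat
  assumes "N > 1" "\<not> prime N" "prime q" "q dvd N"
  shows "q < N"
  using assms dvd_imp_le[OF assms(4)] by (cases "q = N") auto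

lemma nora_val_const_one:
  assumes p: "prime p" "p dvd N" "p < N"
    and c: "c 0 = None" "card (free_coeffs d c) = Suc k" "k \<ge> 1" "even k"
  shows "nora_val N d (Suc k) c False"
proof -
  have move: "legal_move N d c 0 1"
    using c(1) p prime_gt_1_nat[OF p(1)] unfolding legal_move_def by auto
  have "no_root_at_multiples N d p (c(0 := Some 1))"
    using p(1,2) by (intro no_root_at_multiples_if_const) (auto simp: prime_nat_iff)
  moreover have "card (free_coeffs d (c(0 := Some 1))) = k"
    using card_free_coeffs_move[OF move] c(2) by simp
  ultimately have "nora_val N d k (c(0 := Some 1)) True"
    using nora_val_if_no_root_at_multiples[OF p] c(3,4) by blast
  then show ?thesis
    by (rule nora_val_moveI[OF move])
qed

lemma nora_wins_second_even:
  assumes "prime p" "p dvd N" "p < N" "even d" "d \<ge> 2"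
  shows "nora_wins N d False"
proof -
  have "nora_val N d (Suc d) (\<lambda>_. None) False"
    using assms by (intro nora_val_const_one) auto
  then show ?thesis
    unfolding nora_wins_def by simp
qed

lemma sixteen_nondvd_choice:
  "(4::int) dvd A \<Longrightarrow> \<not> 16 dvd A \<Longrightarrow> \<exists>t::nat. t \<le> 1 \<and> (\<forall>s. \<not> (16::int) dvd A + 4 * int t + 8 * s)"
  "\<exists>t::nat. t \<le> 1 \<and> \<not> (16::int) dvd X + 8 * int t"
  by presburger+

lemma nora_val_sixteen:
  assumes N: "N > 1" "16 dvd N" and A: "4 dvd A" "\<not> 16 dvd A" and d: "d \<ge> 5"
    and c: "c 0 = Some A" "c 1 = Some 0" "c 2 = None" "c 3 = None"
    and k: "card (free_coeffs d c) = Suc (Suc k)" "k \<ge> 1" "even k"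
  shows "nora_val N d (Suc (Suc k)) c True"
proof (rule nora_val_replyI)
  fix i v
  assume move: "legal_move N d c i v"
  let ?c = "c(i := Some v)"
  have "c i = None"
    using move unfolding legal_move_def by simp
  then have i: "i \<noteq> 0" "i \<noteq> 1"
    using c(1,2) by (metis option.distinct(1))+
  have two: "prime (2::nat)" "2 dvd N" "2 < N"
    using N dvd_imp_le[of 16 N] by (auto intro: dvd_trans[of 2 16 N])
  have A': "(4::int) dvd int A" "\<not> (16::int) dvd int A"
    using A by (metis of_nat_dvd_iff of_nat_numeral)+
  \<comment> \<open>Nora makes \<open>A + 4 a\<^sub>2 + 8 a\<^sub>3\<close> nonzero mod 16, which rules out roots at even \<open>x\<close>.\<close>
  obtain j t where j: "j \<in> {2, 3}" "?c j = None" "t \<le> 1"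
    and spoil: "\<And>a. completes (?c(j := Some t)) a \<Longrightarrow> \<not> (16::int) dvd int A + 4 * int (a 2) + 8 * int (a 3)"
  proof (cases "i = 2")
    case True
    obtain t :: nat where "t \<le> 1" "\<not> (16::int) dvd (int A + 4 * int v) + 8 * int t"
      using sixteen_nondvd_choice(2) by blast
    then show thesis
      using True c(4) by (intro that[of 3 t]) (auto simp: completes_def algebra_simps)
  next
    case False
    obtain t :: nat where "t \<le> 1" "\<forall>s. \<not> (16::int) dvd int A + 4 * int t + 8 * s"
      using sixteen_nondvd_choice(1)[OF A'] by blast
    then show thesis
      using False c(3) by (intro that[of 2 t]) (auto simp: completes_def)
  qed
  have reply: "legal_move N d ?c j t"
    using j d two(3) unfolding legal_move_def by auto
  have "no_root_at_multiples N d 2 (?c(j := Some t))"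
    using c(1,2) i j(1) N(2) A(2) d spoil by (intro no_root_at_multiples_two) auto
  moreover have "card (free_coeffs d (?c(j := Some t))) = k"
    using card_free_coeffs_move[OF move] card_free_coeffs_move[OF reply] k(1) by simp
  ultimately have "nora_val N d k (?c(j := Some t)) True"
    using nora_val_if_no_root_at_multiples[OF two] k(2,3) by blast
  then show "nora_val N d (Suc k) ?c False"
    by (rule nora_val_moveI[OF reply])
qed

definition blockable_constant :: "nat \<Rightarrow> nat \<Rightarrow> nat \<Rightarrow> bool" where
  "blockable_constant N d A \<longleftrightarrow>
     (\<exists>q. prime q \<and> q dvd N \<and> \<not> q dvd A) \<or>
     (\<exists>q. prime q \<and> q ^ 2 dvd N \<and> \<not> q ^ 2 dvd A) \<or>
     (d \<ge> 5 \<and> 16 dvd N \<and> 4 dvd A \<and> \<not> 16 dvd A)"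

lemma nora_val_blockable:
  assumes N: "N > 1" "\<not> prime N" and A: "blockable_constant N d A" and d: "odd d" "d \<ge> 3"
    and c: "c 0 = Some A" "c 1 = Some 0" "free_coeffs d c = {2..d}"
  shows "nora_val N d (d - 1) c True"
proof -
  have k: "card (free_coeffs d c) = d - 1" "d - 1 \<ge> 1" "True = even (d - 1)"
    using c(3) d by auto
  consider (coprime) q where "prime q" "q dvd N" "\<not> q dvd A"
    | (square) q where "prime q" "q ^ 2 dvd N" "\<not> q ^ 2 dvd A"
    | (sixteen) "d \<ge> 5" "16 dvd N" "4 dvd A" "\<not> 16 dvd A"
    using A unfolding blockable_constant_def by blast
  then show ?thesis
  proof cases
    case coprime
    then show ?thesis
      using nora_val_if_no_root_at_multiples[OF coprime(1,2) prime_factor_less[OF N coprime(1,2)] k]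
        no_root_at_multiples_if_const[of c A q N d] c(1) coprime(2,3) by blast
  next
    case square
    then have "q dvd N"
      by (metis dvd_power dvd_trans zero_less_numeral)
    then show ?thesis
      using nora_val_if_no_root_at_multiples[OF square(1) _ prime_factor_less[OF N square(1)] k]
        no_root_at_multiples_if_const_square[OF c(1,2) square(2,3)] d by auto
  next
    case sixteen
    have "2 \<in> free_coeffs d c" "3 \<in> free_coeffs d c"
      using c(3) sixteen(1) by auto
    then have "c 2 = None" "c 3 = None"
      unfolding free_coeffs_def by auto
    moreover have "card (free_coeffs d c) = Suc (Suc (d - 3))" "d - 3 \<ge> 1" "even (d - 3)"
      using c(3) d sixteen(1) by auto
    ultimately have "nora_val N d (Suc (Suc (d - 3))) c True"
      by (rule nora_val_sixteen[OF N(1) sixteen(2-4) sixteen(1) c(1,2)])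
    moreover have "d - 1 = Suc (Suc (d - 3))"
      using sixteen(1) by simp
    ultimately show ?thesis
      by simp
  qed
qed

lemma nora_wins_first_odd:
  assumes N: "N > 1" "\<not> prime N" and d: "odd d" "d \<ge> 3"
    and blockable: "\<And>A. 0 < A \<Longrightarrow> A < N \<Longrightarrow> blockable_constant N d A"
  shows "nora_wins N d True"
proof -
  obtain p where p: "prime p" "p dvd N"
    using N(1) prime_factor_nat[of N] by auto
  have pN: "p < N"
    using prime_factor_less[OF N p] .
  have "nora_val N d d ((\<lambda>_. None)(i := Some v)) False"
    if move: "legal_move N d (\<lambda>_. None) i v" for i v
  proof (cases "i = 0")
    case False
    have "card (free_coeffs d ((\<lambda>_. None)(i := Some v))) = Suc (d - 1)"
      using card_free_coeffs_move[OF move] d by simp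
    then have "nora_val N d (Suc (d - 1)) ((\<lambda>_. None)(i := Some v)) False"
      using False d by (intro nora_val_const_one[OF p pN]) auto
    then show ?thesis
      using d by simp
  next
    case True
    let ?c = "(\<lambda>_. None)(0 := Some v)"
    have reply: "legal_move N d ?c 1 0"
      using d N unfolding legal_move_def by auto
    have "0 < v" "v < N"
      using move True unfolding legal_move_def by auto
    moreover have "free_coeffs d (?c(1 := Some 0)) = {2..d}"
      unfolding free_coeffs_def by auto
    ultimately have "nora_val N d (d - 1) (?c(1 := Some 0)) True"
      by (intro nora_val_blockable[OF N blockable d]) simp_all
    then have "nora_val N d (Suc (d - 1)) ?c False"
      using d by (intro nora_val_moveI[OF reply]) simp
    then show ?thesis
      using True d by simp
  qed
  then have "nora_val N d (Suc d) (\<lambda>_. None) True"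
    by (rule nora_val_replyI)
  then show ?thesis
    unfolding nora_wins_def by simp
qed

lemma wanda_wins_first_linear:
  assumes "N > 1"
  shows "wanda_wins N 1 True"
proof -
  let ?c = "(\<lambda>_. None)(1 := Some 1)"
  have move: "legal_move N 1 (\<lambda>_. None) 1 1"
    using assms unfolding legal_move_def by auto
  have "has_root_mod N 1 a" if "completes ?c a" for a
  proof -
    have "a 1 = 1"
      using that unfolding completes_def by auto
    then have "int N dvd eval_int a 1 (- int (a 0))"
      unfolding eval_int_def by simp
    then show ?thesis
      using assms has_root_mod_iff_dvd_eval_int[of N 1 a] by auto
  qed
  moreover have "card (free_coeffs 1 ?c) = 1"
    using card_free_coeffs_move[OF move] by simp
  ultimately have "wanda_val N 1 1 ?c False"
    using assms wanda_val_if_completions_have_root by blast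
  then have "wanda_val N 1 (Suc 1) (\<lambda>_. None) True"
    by (rule wanda_val_moveI[OF move])
  then show ?thesis
    unfolding wanda_wins_def by (simp only: Suc_eq_plus1)
qed

definition wanda_opening :: "nat \<Rightarrow> nat \<Rightarrow> nat \<Rightarrow> bool" where
  "wanda_opening N d A \<longleftrightarrow>
     (\<exists>u<N. \<forall>a. a 0 = A \<longrightarrow> a 1 = u \<longrightarrow> has_root_mod N d a) \<and>
     (\<forall>v<N. (\<forall>a. a 0 = A \<longrightarrow> a 1 = v \<longrightarrow> has_root_mod N d a) \<or>
            (\<exists>w<N. \<forall>a. a 0 = A \<longrightarrow> a 1 = v \<longrightarrow> a 2 = w \<longrightarrow> has_root_mod N d a))"

lemma wanda_val_opening_reply:
  assumes N: "N > 1" and d: "d \<ge> 3" and A: "wanda_opening N d A"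
    and c: "c 0 = Some A" "free_coeffs d c = {1..d}" and move: "legal_move N d c i v"
  shows "wanda_val N d (Suc (d - 2)) (c(i := Some v)) True"
proof -
  let ?c = "c(i := Some v)"
  have i: "c i = None" "v < N"
    using move unfolding legal_move_def by auto
  have "i \<noteq> 0"
    using i(1) c(1) by (metis option.distinct(1))
  have card: "card (free_coeffs d ?c) = d - 1"
    using card_free_coeffs_move[OF move] c(2) by simp
  have "1 \<in> free_coeffs d c" "2 \<in> free_coeffs d c"
    using c(2) d by auto
  then have free: "c 1 = None" "c 2 = None"
    unfolding free_coeffs_def by auto
  have answer: "wanda_val N d (Suc (d - 2)) ?c True"
    if reply: "legal_move N d ?c j w" and roots: "\<And>a. a 0 = A \<Longrightarrow> a j = w \<Longrightarrow> a i = v \<Longrightarrow> has_root_mod N d a"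
    for j w
  proof (rule wanda_val_moveI[OF reply], rule wanda_val_if_completions_have_root[OF N])
    show "card (free_coeffs d (?c(j := Some w))) = d - 2"
      using card_free_coeffs_move[OF reply] card by simp
    have "?c j = None"
      using reply unfolding legal_move_def by simp
    then have "j \<noteq> i" "c j = None"
      by (auto split: if_splits)
    then have "j \<noteq> 0"
      using c(1) by (metis option.distinct(1))
    show "has_root_mod N d a" if "completes (?c(j := Some w)) a" for a
    proof (rule roots)
      show "a 0 = A" "a j = w" "a i = v"
        using that c(1) \<open>i \<noteq> 0\<close> \<open>j \<noteq> 0\<close> \<open>j \<noteq> i\<close> unfolding completes_def by auto
    qed
  qed
  show ?thesis
  proof (cases "i = 1")
    case True
    from A i(2) consider "\<forall>a. a 0 = A \<longrightarrow> a 1 = v \<longrightarrow> has_root_mod N d a"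
      | w where "w < N" "\<forall>a. a 0 = A \<longrightarrow> a 1 = v \<longrightarrow> a 2 = w \<longrightarrow> has_root_mod N d a"
      unfolding wanda_opening_def by blast
    then show ?thesis
    proof cases
      case 1
      have "has_root_mod N d a" if "completes ?c a" for a
      proof -
        have "a 0 = A" "a 1 = v"
          using that c(1) True unfolding completes_def by auto
        then show ?thesis
          using 1 by blast
      qed
      then show ?thesis
        using card d by (intro wanda_val_if_completions_have_root[OF N]) auto
    next
      case (2 w)
      have "legal_move N d ?c 2 w"
        using 2(1) d True free unfolding legal_move_def by auto
      then show ?thesis
        using answer 2(2) True by blast
    qed
  next
    case False
    obtain u where u: "u < N" "\<forall>a. a 0 = A \<longrightarrow> a 1 = u \<longrightarrow> has_root_mod N d a"
      using A unfolding wanda_opening_def by blast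
    have "legal_move N d ?c 1 u"
      using u(1) d False free unfolding legal_move_def by auto
    then show ?thesis
      using answer u(2) by blast
  qed
qed

lemma wanda_wins_by_opening:
  assumes N: "N > 1" and d: "d \<ge> 3" and A: "0 < A" "A < N" "wanda_opening N d A"
  shows "wanda_wins N d True"
proof -
  let ?c = "(\<lambda>_. None)(0 := Some A)"
  have move: "legal_move N d (\<lambda>_. None) 0 A"
    using A unfolding legal_move_def by auto
  have "free_coeffs d ?c = {1..d}"
    unfolding free_coeffs_def by auto
  then have "wanda_val N d (Suc (d - 2)) (?c(i := Some v)) True" if "legal_move N d ?c i v" for i v
    using wanda_val_opening_reply[OF N d A(3)] that by simp
  then have "wanda_val N d (Suc (Suc (d - 2))) ?c False"
    by (rule wanda_val_replyI)
  then have "wanda_val N d (Suc (Suc (Suc (d - 2)))) (\<lambda>_. None) True"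
    by (rule wanda_val_moveI[OF move])
  moreover have "d + 1 = Suc (Suc (Suc (d - 2)))"
    using d by simp
  ultimately show ?thesis
    by (simp only: wanda_wins_def)
qed

lemma exists_linear_cong_solution:
  fixes M m :: nat and R :: int
  assumes "coprime M m" "m > 0"
  shows "\<exists>w<m. int m dvd R + int w * int M"
proof -
  have "coprime (int M) (int m)"
    using assms(1) by simp
  then obtain t where t: "[int M * t = - R] (mod int m)"
    using cong_solve_dvd_int[of "int M" "int m" "- R"] by auto
  have "[int M * (t mod int m) = int M * t] (mod int m)"
    by (intro cong_scalar_left) (simp add: cong_def)
  then have "[int M * (t mod int m) = - R] (mod int m)"
    using t by (rule cong_trans)
  then have "int m dvd R + int (nat (t mod int m)) * int M"
    using assms(2) by (simp add: cong_iff_dvd_diff algebra_simps)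
  moreover have "nat (t mod int m) < m"
    using assms(2) by (simp add: nat_less_iff)
  ultimately show ?thesis
    by blast
qed

lemma has_root_mod_nat_linear_prefix:
  assumes "N > 0" "d \<ge> 1" "N dvd X ^ 2" "N dvd a 0 + a 1 * X"
  shows "has_root_mod N d a"
  using assms by (intro has_root_mod_linear_prefix[of N d "int X"])
    (simp_all only: of_nat_power[symmetric] of_nat_mult[symmetric] of_nat_add[symmetric] of_nat_dvd_iff)

lemma has_root_mod_nat_quadratic_prefix:
  assumes "N > 0" "d \<ge> 2" "N dvd X ^ 3" "N dvd a 0 + a 1 * X + a 2 * X ^ 2"
  shows "has_root_mod N d a"
  using assms by (intro has_root_mod_quadratic_prefix[of N d "int X"])
    (simp_all only: of_nat_power[symmetric] of_nat_mult[symmetric] of_nat_add[symmetric] of_nat_dvd_iff)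

lemma has_root_mod_linear_unit:
  assumes "N > 0" "d \<ge> 1" "N = q * A" "q dvd 1 + b * t" "v * X = A * (b * t)" "N dvd X ^ 2"
    and a: "a 0 = A" "a 1 = v"
  shows "has_root_mod N d a"
proof (rule has_root_mod_nat_linear_prefix[OF assms(1,2,6)])
  have "a 0 + a 1 * X = A * (1 + b * t)"
    using a assms(5) by (simp add: algebra_simps)
  then show "N dvd a 0 + a 1 * X"
    using assms(3,4) by (metis dvd_refl mult.commute mult_dvd_mono)
qed

lemma root_high_power_divisible_linear:
  assumes p: "prime p" "\<not> p dvd M" and N: "N = p ^ (2 * k + r + 1) * M"
    and k: "2 * k + r + 1 \<le> 3 * k" and d: "d \<ge> 2" and v: "v = p ^ k * v1"
  shows "\<exists>w<N. \<forall>a. a 0 = p ^ (2 * k + r) * M \<longrightarrow> a 1 = v \<longrightarrow> a 2 = w \<longrightarrow> has_root_mod N d a"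
proof -
  have p1: "p > 1"
    using p(1) prime_gt_1_nat by blast
  have "coprime M p"
    using prime_imp_coprime[OF p] by (simp add: coprime_commute)
  then have "coprime M (p ^ (r + 1))"
    by simp
  then obtain w where w: "w < p ^ (r + 1)" "int (p ^ (r + 1)) dvd int (p ^ r + v1) + int w * int M"
    using exists_linear_cong_solution[of M "p ^ (r + 1)" "int (p ^ r + v1)"] p1 by auto
  have "p ^ (r + 1) \<le> p ^ (2 * k + r + 1)"
    using p1 by (intro power_increasing) auto
  also have "\<dots> \<le> N"
    unfolding N using p by (cases M) auto
  finally have "w < N"
    using w(1) by simp
  moreover have "has_root_mod N d a"
    if a: "a 0 = p ^ (2 * k + r) * M" "a 1 = v" "a 2 = w" for a
  proof (rule has_root_mod_nat_quadratic_prefix)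
    show "N > 0"
      unfolding N using p p1 by (cases M) auto
    have "p ^ (2 * k + r + 1) dvd (p ^ k) ^ 3"
      unfolding power_mult[symmetric] using k by (intro le_imp_power_dvd) simp
    then show "N dvd (p ^ k * M) ^ 3"
      unfolding N power_mult_distrib by (rule mult_dvd_mono) simp
    have pk: "p ^ (2 * k) = p ^ k * p ^ k"
      by (simp add: mult_2 power_add)
    have "p ^ (r + 1) dvd p ^ r + v1 + w * M"
      using w(2) by (metis of_nat_add of_nat_mult of_nat_dvd_iff)
    then have "p ^ (2 * k) * M * p ^ (r + 1) dvd p ^ (2 * k) * M * (p ^ r + v1 + w * M)"
      by (rule mult_dvd_mono[OF dvd_refl])
    moreover have "a 0 + a 1 * (p ^ k * M) + a 2 * (p ^ k * M) ^ 2 = p ^ (2 * k) * M * (p ^ r + v1 + w * M)"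
      unfolding a v power_add pk by (simp add: algebra_simps power2_eq_square)
    ultimately show "N dvd a 0 + a 1 * (p ^ k * M) + a 2 * (p ^ k * M) ^ 2"
      unfolding N by (simp add: power_add algebra_simps)
  qed (use d in auto)
  ultimately show ?thesis
    by blast
qed

lemma root_high_power_unit_linear:
  assumes p: "prime p" "\<not> p dvd M" and N: "N = p ^ (2 * k + r + 1) * M"
    and d: "d \<ge> 1" and v: "v = p ^ s * b" "\<not> p dvd b" "s < k"
    and a: "a 0 = p ^ (2 * k + r) * M" "a 1 = v"
  shows "has_root_mod N d a"
proof -
  have p1: "p > 1"
    using p(1) prime_gt_1_nat by blast
  have "coprime b p"
    using prime_imp_coprime[OF p(1) v(2)] by (simp add: coprime_commute)
  then obtain t where "int p dvd 1 + int t * int b"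
    using exists_linear_cong_solution[of b p 1] p1 by auto
  then have t: "p dvd 1 + b * t"
    by (metis mult.commute of_nat_1 of_nat_add of_nat_mult of_nat_dvd_iff)
  obtain j where j: "s + j = 2 * k + r"
    using v(3) by (metis add_diff_inverse_nat less_imp_le_nat not_le trans_le_add1 mult_2 add_leE)
  show ?thesis
  proof (rule has_root_mod_linear_unit[OF _ d _ t _ _ a])
    show "N > 0"
      unfolding N using p p1 by (cases M) auto
    show "N = p * (p ^ (2 * k + r) * M)"
      unfolding N by simp
    show "v * (p ^ j * M * t) = p ^ (2 * k + r) * M * (b * t)"
      unfolding v(1) j[symmetric] power_add by (simp add: algebra_simps)
    have "p ^ (2 * k + r + 1) dvd (p ^ j) ^ 2"
      unfolding power_mult[symmetric] using j v(3) by (intro le_imp_power_dvd) simp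
    then have "N dvd (p ^ j) ^ 2 * M ^ 2"
      unfolding N by (rule mult_dvd_mono) simp
    then show "N dvd (p ^ j * M * t) ^ 2"
      unfolding power_mult_distrib by (rule dvd_mult2)
  qed
qed

lemma has_root_mod_const_multiple:
  assumes "N > 0" "d \<ge> 1" "N = q * A" "q \<ge> 1" "N dvd A ^ 2" "a 0 = A" "a 1 = q - 1"
  shows "has_root_mod N d a"
  using assms by (intro has_root_mod_linear_unit[of N d q A "q - 1" 1 "q - 1" A]) auto

lemma wanda_opening_high_power:
  assumes p: "prime p" "\<not> p dvd M" and N: "N = p ^ e * M" and e: "e = 3 \<or> e \<ge> 5" and d: "d \<ge> 2"
  shows "wanda_opening N d (p ^ (e - 1) * M)"
proof -
  \<comment> \<open>The exponent \<open>k\<close> of the root \<open>p\<^sup>k M\<close> in the quadratic case must satisfy \<open>2k < e \<le> 3k\<close>.\<close>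
  have "\<exists>k. 2 * k < e \<and> e \<le> 3 * k"
    using e by presburger
  then obtain k where k: "2 * k < e" "e \<le> 3 * k"
    by blast
  define r where "r = e - 1 - 2 * k"
  then have kr: "e = 2 * k + r + 1" "2 * k + r + 1 \<le> 3 * k"
    using k by auto
  have p1: "p > 1"
    using p(1) prime_gt_1_nat by blast
  have N': "N = p ^ (2 * k + r + 1) * M"
    using N kr(1) by simp
  have N0: "N > 0"
    unfolding N using p p1 by (cases M) auto
  have A: "p ^ (e - 1) * M = p ^ (2 * k + r) * M"
    using kr(1) by simp
  have "p \<le> N"
    unfolding N' using p1 N0 N' by (metis dvd_imp_le dvd_mult2 dvd_power le_add2 add_gr_0 zero_less_one)
  moreover have "has_root_mod N d a" if "a 0 = p ^ (2 * k + r) * M" "a 1 = p - 1" for a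
  proof (rule has_root_mod_const_multiple[OF N0 _ _ _ _ that])
    have "p ^ (2 * k + r + 1) dvd (p ^ (2 * k + r)) ^ 2"
      unfolding power_mult[symmetric] using kr by (intro le_imp_power_dvd) simp
    then show "N dvd (p ^ (2 * k + r) * M) ^ 2"
      unfolding N' power_mult_distrib by (rule mult_dvd_mono) simp
  qed (use d p1 N' in auto)
  moreover have "(\<forall>a. a 0 = p ^ (2 * k + r) * M \<longrightarrow> a 1 = v \<longrightarrow> has_root_mod N d a) \<or>
      (\<exists>w<N. \<forall>a. a 0 = p ^ (2 * k + r) * M \<longrightarrow> a 1 = v \<longrightarrow> a 2 = w \<longrightarrow> has_root_mod N d a)" for v
  proof (cases "p ^ k dvd v")
    case True
    then obtain v1 where "v = p ^ k * v1"
      by blast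
    then show ?thesis
      using root_high_power_divisible_linear[OF p N' kr(2) d] by blast
  next
    case False
    then have "v \<noteq> 0"
      by (metis dvd_0_right)
    then obtain b where b: "v = p ^ multiplicity p v * b" "\<not> p dvd b"
      using multiplicity_decompose'[of v p] p1 by auto
    moreover have "multiplicity p v < k"
      using False \<open>v \<noteq> 0\<close> p1 by (intro multiplicity_lessI) auto
    ultimately show ?thesis
      using root_high_power_unit_linear[OF p N'] d by auto
  qed
  ultimately show ?thesis
    unfolding wanda_opening_def A using p1 by (auto intro!: exI[of _ "p - 1"])
qed

lemma hensel_lift_cubic:
  fixes a b c e z :: int
  defines "f \<equiv> \<lambda>y. a + b * y + c * y ^ 2 + e * y ^ 3"
    and "f' \<equiv> \<lambda>y. b + 2 * c * y + 3 * e * y ^ 2"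
  assumes p: "prime p" and K: "K \<ge> 1" and root: "int p dvd f z" and simple: "\<not> int p dvd f' z"
  shows "\<exists>y. int p ^ K dvd f y \<and> [y = z] (mod int p)"
  using K
proof (induction K)
  case 0
  then show ?case
    by simp
next
  case (Suc K)
  show ?case
  proof (cases "K = 0")
    case True
    then show ?thesis
      using root by auto
  next
    case False
    then obtain y where y: "int p ^ K dvd f y" "[y = z] (mod int p)"
      using Suc.IH by auto
    have "[f' y = f' z] (mod int p)"
      unfolding f'_def using y(2) by (intro cong_add cong_mult cong_pow cong_refl)
    then have "\<not> int p dvd f' y"
      using simple by (simp add: cong_dvd_iff)
    then have "coprime (f' y) (int p)"
      using p by (simp add: coprime_commute prime_imp_coprime)
    obtain s where s: "f y = int p ^ K * s"
      using y(1) by (elim dvdE)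
    obtain t where "[f' y * t = - s] (mod int p)"
      using cong_solve_dvd_int[of "f' y" "int p" "- s"] \<open>coprime (f' y) (int p)\<close> by auto
    then have t: "int p dvd s + t * f' y"
      by (simp add: cong_iff_dvd_diff algebra_simps)
    \<comment> \<open>Taylor expansion of the cubic at \<open>y\<close> with increment \<open>u = p\<^sup>K t\<close>.\<close>
    define u where "u = int p ^ K * t"
    have "f (y + u) = f y + u * f' y + u ^ 2 * (c + e * (3 * y + u))"
      unfolding f_def f'_def by (simp add: algebra_simps power2_eq_square power3_eq_cube)
    also have "\<dots> = int p ^ K * (s + t * f' y) + int p ^ (2 * K) * (t ^ 2 * (c + e * (3 * y + u)))"
      unfolding u_def s by (simp add: algebra_simps power_mult_distrib power_mult[symmetric] mult_2 power_add)
    finally have expand: "f (y + u) = \<dots>" .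
    have "int p ^ Suc K dvd int p ^ K * (s + t * f' y)"
      using t by (simp add: mult_dvd_mono)
    moreover have "int p ^ Suc K dvd int p ^ (2 * K)"
      using False by (intro le_imp_power_dvd) auto
    ultimately have "int p ^ Suc K dvd f (y + u)"
      unfolding expand by (intro dvd_add) (auto intro: dvd_mult2)
    moreover have "[y + u = z + 0] (mod int p)"
      using y(2) False by (intro cong_add) (simp_all add: u_def cong_0_iff)
    ultimately show ?thesis
      by auto
  qed
qed

lemma exists_simple_root_quadratic_mod_prime:
  fixes b :: int
  assumes p: "prime p" "odd p" and M: "\<not> p dvd M"
  shows "\<exists>w<p. \<exists>y0. int p dvd 1 + b * y0 + int w * int M * y0 ^ 2 \<and>
           \<not> int p dvd b + 2 * int w * int M * y0"
proof -
  have p1: "p > 1"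
    using p(1) prime_gt_1_nat by blast
  have M': "coprime M p"
    using prime_imp_coprime[OF p(1) M] by (simp add: coprime_commute)
  show ?thesis
  proof (cases "int p dvd b + 2")
    case False
    obtain w where w: "w < p" "int p dvd (1 + b) + int w * int M"
      using exists_linear_cong_solution[OF M', of "1 + b"] p1 by auto
    have "\<not> int p dvd b + 2 * int w * int M"
    proof
      assume h: "int p dvd b + 2 * int w * int M"
      have "int p dvd 2 * ((1 + b) + int w * int M) - (b + 2 * int w * int M)"
        by (rule dvd_diff[OF dvd_mult[OF w(2)] h])
      then show False
        using False by (simp add: algebra_simps)
    qed
    then show ?thesis
      using w by (intro exI[of _ w] conjI exI[of _ 1]) (simp_all add: algebra_simps)
  next
    case True
    obtain w where w: "w < p" "int p dvd (1 - b) + int w * int M"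
      using exists_linear_cong_solution[OF M', of "1 - b"] p1 by auto
    have "\<not> int p dvd b - 2 * int w * int M"
    proof
      assume h: "int p dvd b - 2 * int w * int M"
      have "int p dvd 2 * ((1 - b) + int w * int M) + (b - 2 * int w * int M) + (b + 2)"
        by (rule dvd_add[OF dvd_add[OF dvd_mult[OF w(2)] h] True])
      then have "int p dvd 4"
        by (simp add: algebra_simps)
      then have "p dvd 4"
        by (metis of_nat_dvd_iff of_nat_numeral)
      then have "p dvd 2 ^ 2"
        by simp
      then have "p dvd 2"
        by (rule prime_dvd_power[OF p(1)])
      then have "p \<le> 2"
        by (rule dvd_imp_le) simp
      then show False
        using p(2) p1 by (cases "p = 2") auto
    qed
    then show ?thesis
      using w by (intro exI[of _ w] conjI exI[of _ "-1"]) (simp_all add: algebra_simps)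
  qed
qed

lemma root_fourth_power_divisible_linear:
  assumes p: "prime p" "odd p" "\<not> p dvd M" and N: "N = p ^ 4 * M" and d: "d \<ge> 3" and v: "v = p * b"
  shows "\<exists>w<N. \<forall>a. a 0 = p ^ 2 * M \<longrightarrow> a 1 = v \<longrightarrow> a 2 = w \<longrightarrow> has_root_mod N d a"
proof -
  obtain w y0 where w: "w < p" "int p dvd 1 + int b * y0 + int w * int M * y0 ^ 2"
    "\<not> int p dvd int b + 2 * int w * int M * y0"
    using exists_simple_root_quadratic_mod_prime[OF p, of "int b"] by blast
  have M0: "M > 0"
    using p(3) by (cases M) auto
  have "p \<le> N"
    unfolding N using M0 p(1) prime_gt_0_nat[OF p(1)]
    by (metis dvd_imp_le dvd_mult2 dvd_power zero_less_numeral nat_0_less_mult_iff zero_less_power)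
  moreover have "has_root_mod N d a" if a: "a 0 = p ^ 2 * M" "a 1 = v" "a 2 = w" for a
  proof -
    define c3 where "c3 = int p * int (a 3) * int M ^ 2"
    define Q where "Q y = 1 + int b * y + (int w * int M) * y ^ 2 + c3 * y ^ 3" for y
    \<comment> \<open>Mod \<open>p\<close> the cubic \<open>Q\<close> is the quadratic of \<open>w\<close>, which has the simple root \<open>y0\<close>.\<close>
    have "Q y0 = (1 + int b * y0 + int w * int M * y0 ^ 2) + int p * (int (a 3) * int M ^ 2 * y0 ^ 3)"
      unfolding Q_def c3_def by (simp add: algebra_simps)
    then have root: "int p dvd Q y0"
      using w(2) by simp
    have "int b + 2 * (int w * int M) * y0 + 3 * c3 * y0 ^ 2 =
        (int b + 2 * int w * int M * y0) + int p * (3 * int (a 3) * int M ^ 2 * y0 ^ 2)"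
      unfolding c3_def by (simp add: algebra_simps)
    then have simple: "\<not> int p dvd int b + 2 * (int w * int M) * y0 + 3 * c3 * y0 ^ 2"
      using w(3) by (metis dvd_add_left_iff dvd_triv_left)
    obtain y where y: "int p ^ 2 dvd Q y"
      using hensel_lift_cubic[OF p(1) _ root[unfolded Q_def] simple, of 2] unfolding Q_def by auto
    show ?thesis
    proof (rule has_root_mod_cubic_prefix[of N d "int p * int M * y"])
      show "N > 0" "d \<ge> 3"
        unfolding N using M0 p(1) prime_gt_0_nat d by auto
      show "int N dvd (int p * int M * y) ^ 4"
        unfolding N by (simp add: power_mult_distrib mult_dvd_mono le_imp_power_dvd)
      have "int (a 0) + int (a 1) * (int p * int M * y) + int (a 2) * (int p * int M * y) ^ 2 +
          int (a 3) * (int p * int M * y) ^ 3 = int p ^ 2 * int M * Q y"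
        using a v unfolding Q_def c3_def by (simp add: power2_eq_square power3_eq_cube algebra_simps)
      moreover have "int N = int p ^ 2 * int M * int p ^ 2"
        unfolding N by (simp add: power_add[symmetric] algebra_simps)
      ultimately show "int N dvd int (a 0) + int (a 1) * (int p * int M * y) +
          int (a 2) * (int p * int M * y) ^ 2 + int (a 3) * (int p * int M * y) ^ 3"
        using y by (simp add: mult_dvd_mono)
    qed
  qed
  ultimately show ?thesis
    using w(1) by (intro exI[of _ w]) auto
qed

lemma wanda_opening_fourth_power:
  assumes p: "prime p" "odd p" "\<not> p dvd M" and N: "N = p ^ 4 * M" and d: "d \<ge> 3"
  shows "wanda_opening N d (p ^ 2 * M)"
proof -
  have p1: "p > 1"
    using p(1) prime_gt_1_nat by blast
  have M0: "M > 0"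
    using p(3) by (cases M) auto
  have NA: "N = p ^ 2 * (p ^ 2 * M)"
    unfolding N by (simp add: power_add[symmetric])
  have N0: "N > 0"
    unfolding N using M0 p1 by simp
  have NA2: "N dvd (p ^ 2 * M) ^ 2"
    unfolding N by (simp add: power_mult_distrib power_mult[symmetric] mult_dvd_mono)
  have "p ^ 2 \<le> N"
    using NA N0 by (metis dvd_imp_le dvd_triv_left)
  then have "p ^ 2 - 1 < N"
    using p1 by (simp add: less_le_trans[of _ "p ^ 2"])
  moreover have "has_root_mod N d a" if "a 0 = p ^ 2 * M" "a 1 = p ^ 2 - 1" for a
    using N0 d NA p1 NA2 that by (intro has_root_mod_const_multiple[of N d "p ^ 2"]) auto
  moreover have "(\<forall>a. a 0 = p ^ 2 * M \<longrightarrow> a 1 = v \<longrightarrow> has_root_mod N d a) \<or>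
      (\<exists>w<N. \<forall>a. a 0 = p ^ 2 * M \<longrightarrow> a 1 = v \<longrightarrow> a 2 = w \<longrightarrow> has_root_mod N d a)" for v
  proof (cases "p dvd v")
    case True
    then show ?thesis
      using root_fourth_power_divisible_linear[OF p N d] by blast
  next
    case False
    have "coprime v p"
      using prime_imp_coprime[OF p(1) False] by (simp add: coprime_commute)
    then obtain t where "int (p ^ 2) dvd 1 + int t * int v"
      using exists_linear_cong_solution[of v "p ^ 2" 1] p1 by auto
    then have t: "p ^ 2 dvd 1 + v * t"
      by (metis mult.commute of_nat_1 of_nat_add of_nat_mult of_nat_dvd_iff)
    have "N dvd (p ^ 2 * M * t) ^ 2"
      using NA2 by (simp add: power_mult_distrib)
    then have "has_root_mod N d a" if "a 0 = p ^ 2 * M" "a 1 = v" for a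
      using N0 d NA t that by (intro has_root_mod_linear_unit[of N d "p ^ 2" "p ^ 2 * M" v t v "p ^ 2 * M * t"])
        (auto simp: algebra_simps)
    then show ?thesis
      by blast
  qed
  ultimately show ?thesis
    unfolding wanda_opening_def using p1 by (auto intro!: exI[of _ "p ^ 2 - 1"])
qed

lemma root_sixteen_odd_half:
  assumes n: "odd n" and N: "N = 16 * n" and b: "odd b"
    and a: "a 0 = 4 * n" "a 1 = 2 * b" "a 2 = 0"
  shows "has_root_mod N 3 a"
proof -
  define c where "c = int (a 3) * int n ^ 2"
  obtain y :: int where y: "4 dvd 1 + int b * y + 2 * c * y ^ 3"
  proof -
    have "4 dvd 1 + int b * 1 + 2 * c * 1 ^ 3 \<or> 4 dvd 1 + int b * 3 + 2 * c * 3 ^ 3"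
      using b by simp presburger
    then show thesis
      using that by blast
  qed
  show ?thesis
  proof (rule has_root_mod_cubic_prefix[of N 3 "2 * int n * y"])
    show "N > 0" "3 \<le> (3::nat)"
      using n N by (auto intro: odd_pos)
    show "int N dvd (2 * int n * y) ^ 4"
      unfolding N by (simp add: power_mult_distrib mult_dvd_mono)
    obtain z where z: "1 + int b * y + 2 * c * y ^ 3 = 4 * z"
      using y by (elim dvdE)
    have "int (a 0) + int (a 1) * (2 * int n * y) + int (a 2) * (2 * int n * y) ^ 2 +
        int (a 3) * (2 * int n * y) ^ 3 = 4 * int n * (1 + int b * y + 2 * c * y ^ 3)"
      using a unfolding c_def by (simp add: power2_eq_square power3_eq_cube algebra_simps)
    also have "\<dots> = int N * z"
      unfolding z N by simp
    finally show "int N dvd int (a 0) + int (a 1) * (2 * int n * y) + int (a 2) * (2 * int n * y) ^ 2 +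
        int (a 3) * (2 * int n * y) ^ 3"
      by simp
  qed
qed

lemma root_sixteen_even_half:
  assumes n: "odd n" and N: "N = 16 * n" and b: "even b" and w: "4 dvd int w * int n - int b - 3"
    and a: "a 0 = 4 * n" "a 1 = 2 * b" "a 2 = w"
  shows "has_root_mod N 3 a"
proof -
  have N0: "N > 0"
    using n N by (auto intro: odd_pos)
  have "(2::int) dvd 4"
    by simp
  then have "even (int w * int n - int b - 3)"
    using w by (rule dvd_trans)
  then have ow: "odd w"
    using b n by simp
  show ?thesis
  proof (cases "even (a 3)")
    case True
    \<comment> \<open>\<open>x = 2n\<close> is a root: the choice of \<open>w\<close> makes \<open>f(2n)/(4n) = 1 + b + wn + 2 a\<^sub>3 n\<^sup>2 \<equiv> 0 (mod 4)\<close>.\<close>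
    have "4 dvd (int w * int n - int b - 3) + 2 * int b + 2 * int (a 3) * int n ^ 2 + 4"
      using w b True by (intro dvd_add) (auto elim!: evenE simp: algebra_simps)
    then have "4 dvd 1 + int b + int w * int n + 2 * int (a 3) * int n ^ 2"
      by (simp add: algebra_simps)
    then obtain z where z: "1 + int b + int w * int n + 2 * int (a 3) * int n ^ 2 = 4 * z"
      by (elim dvdE)
    show ?thesis
    proof (rule has_root_mod_cubic_prefix[OF N0 order_refl, of "2 * int n"])
      show "int N dvd (2 * int n) ^ 4"
        unfolding N by (simp add: power_mult_distrib mult_dvd_mono)
      have "int (a 0) + int (a 1) * (2 * int n) + int (a 2) * (2 * int n) ^ 2 + int (a 3) * (2 * int n) ^ 3 =
          4 * int n * (1 + int b + int w * int n + 2 * int (a 3) * int n ^ 2)"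
        using a by (simp add: power2_eq_square power3_eq_cube algebra_simps)
      also have "\<dots> = int N * z"
        unfolding z N by simp
      finally show "int N dvd int (a 0) + int (a 1) * (2 * int n) + int (a 2) * (2 * int n) ^ 2 +
          int (a 3) * (2 * int n) ^ 3"
        by simp
    qed
  next
    case False
    \<comment> \<open>Otherwise lift the simple root \<open>y = 1\<close> of \<open>f(ny)\<close> modulo 2 to a root modulo 16.\<close>
    define Q where "Q y = 4 * int n + (int (a 1) * int n) * y + (int w * int n ^ 2) * y ^ 2 +
        (int (a 3) * int n ^ 3) * y ^ 3" for y
    have "int 2 dvd Q 1"
      unfolding Q_def using a n ow False by simp
    moreover have "\<not> int 2 dvd int (a 1) * int n + 2 * (int w * int n ^ 2) * 1 + 3 * (int (a 3) * int n ^ 3) * 1 ^ 2"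
      using a n ow False by simp
    ultimately obtain z where "int 2 ^ 4 dvd Q z"
      using hensel_lift_cubic[where p=2 and K=4 and a="4 * int n" and b="int (a 1) * int n"
          and c="int w * int n ^ 2" and e="int (a 3) * int n ^ 3" and z=1]
      unfolding Q_def by auto
    moreover have "int n dvd Q z"
      unfolding Q_def by (simp add: power2_eq_square power3_eq_cube)
    moreover have "coprime (16::int) (int n)"
      using n coprime_power_left_iff[of 2 4 "int n"] by simp
    ultimately have "int N dvd Q z"
      unfolding N by (simp add: divides_mult)
    moreover have "eval_int a 3 (int n * z) = Q z"
      unfolding eval_int_cubic Q_def using a by (simp add: power_mult_distrib algebra_simps)
    ultimately show ?thesis
      using has_root_mod_iff_dvd_eval_int[OF N0] by metis
  qed
qed

lemma wanda_opening_sixteen: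
  assumes n: "odd n" and N: "N = 16 * n"
  shows "wanda_opening N 3 (4 * n)"
proof -
  have n0: "n > 0"
    using n by (rule odd_pos)
  have N0: "N > 0" and NA: "N = 4 * (4 * n)" and NA2: "N dvd (4 * n) ^ 2"
    using n0 unfolding N by (simp_all add: power2_eq_square)
  have "has_root_mod N 3 a" if "a 0 = 4 * n" "a 1 = 3" for a
    using N0 NA NA2 that by (intro has_root_mod_const_multiple[of N 3 4]) auto
  moreover have "3 < N"
    using N n0 by simp
  moreover have "(\<forall>a. a 0 = 4 * n \<longrightarrow> a 1 = v \<longrightarrow> has_root_mod N 3 a) \<or>
      (\<exists>w<N. \<forall>a. a 0 = 4 * n \<longrightarrow> a 1 = v \<longrightarrow> a 2 = w \<longrightarrow> has_root_mod N 3 a)" for v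
  proof (cases "even v")
    case False
    then have "coprime v 2"
      by (simp add: coprime_commute)
    then have "coprime v (2 ^ 2)"
      by (simp only: coprime_power_right_iff simp_thms)
    then obtain t where "int 4 dvd 1 + int t * int v"
      using exists_linear_cong_solution[of v 4 1] by auto
    then have t: "4 dvd 1 + v * t"
      by (metis mult.commute of_nat_1 of_nat_add of_nat_mult of_nat_dvd_iff)
    have "N dvd (4 * n * t) ^ 2"
      using NA2 by (simp add: power_mult_distrib)
    then have "has_root_mod N 3 a" if "a 0 = 4 * n" "a 1 = v" for a
      using N0 NA t that by (intro has_root_mod_linear_unit[of N 3 4 "4 * n" v t v "4 * n * t"])
        (auto simp: algebra_simps)
    then show ?thesis
      by blast
  next
    case True
    then obtain b where b: "v = 2 * b"
      by blast
    show ?thesis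
    proof (cases "even b")
      case False
      have "\<forall>a. a 0 = 4 * n \<longrightarrow> a 1 = v \<longrightarrow> a 2 = 0 \<longrightarrow> has_root_mod N 3 a"
        unfolding b using root_sixteen_odd_half[OF n N False] by blast
      then show ?thesis
        using N0 by blast
    next
      case True
      have "coprime n 2"
        using n by (simp add: coprime_commute)
      then have "coprime n (2 ^ 2)"
        by (simp only: coprime_power_right_iff simp_thms)
      then obtain w where w: "w < 4" "int 4 dvd (- 3 - int b) + int w * int n"
        using exists_linear_cong_solution[of n 4 "- 3 - int b"] by auto
      then have "4 dvd int w * int n - int b - 3"
        by (simp add: algebra_simps)
      then have "\<forall>a. a 0 = 4 * n \<longrightarrow> a 1 = v \<longrightarrow> a 2 = w \<longrightarrow> has_root_mod N 3 a"
        unfolding b using root_sixteen_even_half[OF n N True] by blast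
      moreover have "w < N"
        using w(1) N n0 by simp
      ultimately show ?thesis
        by blast
    qed
  qed
  ultimately show ?thesis
    unfolding wanda_opening_def by blast
qed

lemma cube_free_iff_multiplicity:
  fixes N :: nat
  assumes "N \<noteq> 0"
  shows "cube_free N \<longleftrightarrow> (\<forall>q. prime q \<longrightarrow> multiplicity q N \<le> 2)"
proof
  assume cf: "cube_free N"
  show "\<forall>q. prime q \<longrightarrow> multiplicity q N \<le> 2"
  proof (intro allI impI)
    fix q :: nat
    assume q: "prime q"
    show "multiplicity q N \<le> 2"
    proof (rule ccontr)
      assume "\<not> multiplicity q N \<le> 2"
      then have "q ^ 3 dvd N"
        by (intro multiplicity_dvd') simp
      then have "q = 1"
        using cf unfolding cube_free_def by blast
      then show False
        using q by simp
    qed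
  qed
next
  assume le2: "\<forall>q. prime q \<longrightarrow> multiplicity q N \<le> 2"
  show "cube_free N"
    unfolding cube_free_def
  proof (intro allI impI)
    fix m
    assume m: "m ^ 3 dvd N"
    show "m = 1"
    proof (rule ccontr)
      assume "m \<noteq> 1"
      then obtain q where q: "prime q" "q dvd m"
        using prime_factor_nat by blast
      then have "q ^ 3 dvd N"
        using dvd_trans[OF dvd_power_same m] by blast
      moreover have "\<not> is_unit q"
        using q(1) not_prime_unit by blast
      ultimately have "3 \<le> multiplicity q N"
        using multiplicity_geI[OF assms] by blast
      moreover have "multiplicity q N \<le> 2"
        using le2 q(1) by blast
      ultimately show False
        by linarith
    qed
  qed
qed

lemma dvd_if_cube_free_locally_dvd:
  fixes N A :: nat
  assumes N: "N \<noteq> 0" "cube_free N"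
    and prime_dvd: "\<And>q. prime q \<Longrightarrow> q dvd N \<Longrightarrow> q dvd A"
    and square_dvd: "\<And>q. prime q \<Longrightarrow> q ^ 2 dvd N \<Longrightarrow> q ^ 2 dvd A"
  shows "N dvd A"
proof (cases "A = 0")
  case False
  show ?thesis
  proof (rule multiplicity_le_imp_dvd[OF N(1)])
    fix q :: nat
    assume q: "prime q"
    then have "\<not> is_unit q"
      by (simp add: prime_nat_iff)
    have "multiplicity q N \<le> 2"
      using N q cube_free_iff_multiplicity by blast
    then consider "multiplicity q N = 0" | "multiplicity q N = 1" | "multiplicity q N = 2"
      by linarith
    then show "multiplicity q N \<le> multiplicity q A"
    proof cases
      case 2
      then have "q ^ 1 dvd A"
        using prime_dvd[OF q] multiplicity_dvd'[of 1 q N] by simp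
      then show ?thesis
        using 2 multiplicity_geI[OF False \<open>\<not> is_unit q\<close>] by fastforce
    next
      case 3
      then have "q ^ 2 dvd A"
        using square_dvd[OF q] multiplicity_dvd'[of 2 q N] by simp
      then show ?thesis
        using 3 multiplicity_geI[OF False \<open>\<not> is_unit q\<close>] by fastforce
    qed simp
  qed
qed simp

lemma blockable_constant_cube_free:
  assumes "cube_free N" "0 < A" "A < N"
  shows "blockable_constant N d A"
proof (rule ccontr)
  assume not_blockable: "\<not> blockable_constant N d A"
  have "N dvd A"
  proof (rule dvd_if_cube_free_locally_dvd)
    show "N \<noteq> 0" "cube_free N"
      using assms by auto
    show "q dvd A" if "prime q" "q dvd N" for q
      using not_blockable that unfolding blockable_constant_def by blast
    show "q ^ 2 dvd A" if "prime q" "q ^ 2 dvd N" for q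
      using not_blockable that unfolding blockable_constant_def by blast
  qed
  then show False
    using dvd_imp_le[OF _ assms(2)] assms(3) by fastforce
qed

lemma blockable_constant_sixteen:
  assumes d: "d \<ge> 5" and N: "odd N2" "cube_free N2" "N = 16 * N2" and A: "0 < A" "A < N"
  shows "blockable_constant N d A"
proof (rule ccontr)
  assume "\<not> blockable_constant N d A"
  then have prime_dvd: "\<And>q. prime q \<Longrightarrow> q dvd N \<Longrightarrow> q dvd A"
    and square_dvd: "\<And>q. prime q \<Longrightarrow> q ^ 2 dvd N \<Longrightarrow> q ^ 2 dvd A"
    and not_sixteen: "\<not> (16 dvd N \<and> 4 dvd A \<and> \<not> 16 dvd A)"
    using d unfolding blockable_constant_def by blast+
  have "N2 dvd A"
  proof (rule dvd_if_cube_free_locally_dvd)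
    show "N2 \<noteq> 0" "cube_free N2"
      using N(1,2) by (auto intro: odd_pos)
    show "q dvd A" if "prime q" "q dvd N2" for q
      using prime_dvd[OF that(1)] that(2) unfolding N(3) by (simp add: dvd_mult)
    show "q ^ 2 dvd A" if "prime q" "q ^ 2 dvd N2" for q
      using square_dvd[OF that(1)] that(2) unfolding N(3) by (simp add: dvd_mult)
  qed
  moreover have "4 dvd A"
    using square_dvd[of 2] unfolding N(3) by simp
  then have "16 dvd A"
    using not_sixteen unfolding N(3) by simp
  moreover have "coprime (16::nat) N2"
    using N(1) coprime_power_left_iff[of 2 4 N2] by simp
  ultimately have "N dvd A"
    unfolding N(3) by (simp add: divides_mult)
  then show False
    using dvd_imp_le[OF _ A(1)] A(2) by fastforce
qed

lemma cube_free_odd_cofactor: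
  fixes N M :: nat
  assumes N: "N = 16 * M" "N \<noteq> 0" and M: "odd M"
    and odd_le2: "\<And>q. prime q \<Longrightarrow> odd q \<Longrightarrow> multiplicity q N \<le> 2"
  shows "cube_free M"
proof -
  have "multiplicity q M \<le> 2" if q: "prime q" for q
  proof (cases "q = 2")
    case True
    then show ?thesis
      using M by (simp add: not_dvd_imp_multiplicity_0)
  next
    case False
    then have "q > 2"
      using prime_ge_2_nat[OF q] by simp
    then have "multiplicity q N \<le> 2"
      using odd_le2[OF q prime_odd_nat[OF q]] by blast
    moreover have "multiplicity q M \<le> multiplicity q N"
      using dvd_imp_multiplicity_le[of M N q] N by simp
    ultimately show ?thesis
      by linarith
  qed
  moreover have "M \<noteq> 0"
    using odd_pos[OF M] by simp
  ultimately show ?thesis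
    using cube_free_iff_multiplicity by blast
qed

lemma not_cube_free_cases:
  fixes N :: nat
  assumes N: "N \<noteq> 0" "\<not> cube_free N"
  obtains (high_power) p e M where "prime p" "\<not> p dvd M" "N = p ^ e * M" "e = 3 \<or> e \<ge> 5"
    | (fourth_power) p M where "prime p" "odd p" "\<not> p dvd M" "N = p ^ 4 * M"
    | (sixteen) M where "odd M" "cube_free M" "N = 16 * M"
proof -
  have decompose: "\<exists>M. \<not> p dvd M \<and> N = p ^ multiplicity p N * M" if "prime p" for p
  proof -
    have "\<not> is_unit p"
      using that not_prime_unit by blast
    then obtain M where "N = p ^ multiplicity p N * M" "\<not> p dvd M"
      using multiplicity_decompose'[OF N(1)] by blast
    then show ?thesis
      by blast
  qed
  obtain p where p: "prime p" "\<not> multiplicity p N \<le> 2"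
    using N cube_free_iff_multiplicity by blast
  show ?thesis
  proof (cases "\<exists>q. prime q \<and> (multiplicity q N = 3 \<or> multiplicity q N \<ge> 5)")
    case True
    then obtain q where "prime q" "multiplicity q N = 3 \<or> multiplicity q N \<ge> 5"
      by blast
    moreover obtain M where "\<not> q dvd M" "N = q ^ multiplicity q N * M"
      using decompose[OF \<open>prime q\<close>] by blast
    ultimately show ?thesis
      using high_power by blast
  next
    case no_high: False
    show ?thesis
    proof (cases "\<exists>q. prime q \<and> odd q \<and> multiplicity q N = 4")
      case True
      then obtain q where q: "prime q" "odd q" "multiplicity q N = 4"
        by blast
      moreover obtain M where "\<not> q dvd M" "N = q ^ multiplicity q N * M"
        using decompose[OF q(1)] by blast
      ultimately show ?thesis
        using fourth_power by simp
    next
      case False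
      have odd_le2: "multiplicity q N \<le> 2" if "prime q" "odd q" for q
      proof -
        have "multiplicity q N \<noteq> 3" "\<not> multiplicity q N \<ge> 5" "multiplicity q N \<noteq> 4"
          using no_high False that by blast+
        then show ?thesis
          by linarith
      qed
      have "p = 2"
        using odd_le2[OF p(1) prime_odd_nat[OF p(1)]] p(2) prime_ge_2_nat[OF p(1)] by linarith
      moreover have "multiplicity p N \<noteq> 3" "\<not> multiplicity p N \<ge> 5"
        using no_high p(1) by blast+
      ultimately have "multiplicity 2 N = 4"
        using p(2) by simp
      then obtain M where M: "\<not> 2 dvd M" "N = 16 * M"
        using decompose[OF two_is_prime_nat] by auto
      then show ?thesis
        using sixteen cube_free_odd_cofactor[OF M(2) N(1)] odd_le2 by blast
    qed
  qed
qed

lemma wanda_wins_first_not_cube_free: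
  assumes N: "N > 1" and d: "odd d" "d \<ge> 3" and not_cube_free: "\<not> cube_free N"
    and not_sixteen: "\<not> (d > 3 \<and> (\<exists>N2. odd N2 \<and> cube_free N2 \<and> N = 16 * N2))"
  shows "wanda_wins N d True"
proof -
  have by_opening: "wanda_wins N d True" if "N = q * A" "q > 1" "wanda_opening N d A" for q A
  proof (rule wanda_wins_by_opening[OF N d(2) _ _ that(3)])
    show "0 < A" "A < N"
      using that(1,2) N by (auto intro: Nat.gr0I)
  qed
  have N0: "N \<noteq> 0"
    using N by simp
  from N0 not_cube_free show ?thesis
  proof (cases rule: not_cube_free_cases)
    case (high_power p e M)
    have "N = p * (p ^ (e - 1) * M)"
      using high_power by (cases e) auto
    moreover have "wanda_opening N d (p ^ (e - 1) * M)"
      using high_power d by (intro wanda_opening_high_power) auto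
    ultimately show ?thesis
      using by_opening prime_gt_1_nat[OF high_power(1)] by blast
  next
    case (fourth_power p M)
    have "N = p ^ 2 * (p ^ 2 * M)"
      using fourth_power by (simp flip: power_add)
    moreover have "wanda_opening N d (p ^ 2 * M)"
      using fourth_power d by (intro wanda_opening_fourth_power) auto
    moreover have "p ^ 2 > 1"
      using one_less_power[OF prime_gt_1_nat[OF fourth_power(1)], of 2] by simp
    ultimately show ?thesis
      using by_opening by blast
  next
    case (sixteen M)
    then have "d = 3"
      using not_sixteen d by auto
    then have "wanda_opening N d (4 * M)"
      using sixteen wanda_opening_sixteen by simp
    moreover have "N = 4 * (4 * M)"
      using sixteen by simp
    ultimately show ?thesis
      using by_opening[of 4 "4 * M"] by simp
  qed
qed

lemma last_player_wins_even:
  assumes "N > 1" "\<not> prime N" "even d" "d \<ge> 1"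
  shows "last_player_wins N d wanda_first"
proof -
  obtain p where p: "prime p" "p dvd N"
    using assms(1) prime_factor_nat[of N] by auto
  have "d \<ge> 2"
    using assms(3,4) by presburger
  then have "wanda_wins N d True" "nora_wins N d False"
    using assms prime_factor_less[OF assms(1,2) p] p
    by (auto intro: wanda_wins_first_even nora_wins_second_even)
  then show ?thesis
    using assms(3) unfolding last_player_wins_def by (cases wanda_first) auto
qed

lemma nora_wins_first_odd_if_blockable:
  assumes N: "N > 1" "\<not> prime N" and d: "odd d"
    and blockable: "(d > 1 \<and> cube_free N) \<or> (d > 3 \<and> (\<exists>N2. odd N2 \<and> cube_free N2 \<and> N = 16 * N2))"
  shows "nora_wins N d True"
proof (rule nora_wins_first_odd[OF N d])
  have "d > 1"
    using blockable by auto
  then show "d \<ge> 3"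
    using d by presburger
  show "blockable_constant N d A" if "0 < A" "A < N" for A
  proof -
    have "d > 3 \<Longrightarrow> d \<ge> 5"
      using d by presburger
    then show ?thesis
      using blockable blockable_constant_cube_free blockable_constant_sixteen that by blast
  qed
qed

lemma wanda_wins_first_odd_if_not_blockable:
  assumes N: "N > 1" and d: "odd d"
    and not_blockable: "\<not> ((d > 1 \<and> cube_free N) \<or> (d > 3 \<and> (\<exists>N2. odd N2 \<and> cube_free N2 \<and> N = 16 * N2)))"
  shows "wanda_wins N d True"
proof (cases "d = 1")
  case True
  then show ?thesis
    using wanda_wins_first_linear[OF N] by simp
next
  case False
  then have "d \<ge> 3"
    using d by presburger
  then show ?thesis
    using wanda_wins_first_not_cube_free[OF N d] not_blockable by auto
qed

theorem theorem1:
  fixes N d :: nat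
  assumes "d \<ge> 1" and "N > 1" and "\<not> prime N"
  shows "((even d \<or> (d > 1 \<and> cube_free N) \<or>
            (d > 3 \<and> (\<exists>N2. odd N2 \<and> cube_free N2 \<and> N = 16 * N2)))
           \<longrightarrow> (\<forall>wf. last_player_wins N d wf)) \<and>
         (\<not> (even d \<or> (d > 1 \<and> cube_free N) \<or>
            (d > 3 \<and> (\<exists>N2. odd N2 \<and> cube_free N2 \<and> N = 16 * N2)))
           \<longrightarrow> (\<forall>wf. wanda_wins N d wf))"
proof (cases "even d")
  case True
  then show ?thesis
    using last_player_wins_even assms by blast
next
  case odd: False
  then have second: "wanda_wins N d False"
    using wanda_wins_second_odd assms(2) by blast
  show ?thesis
  proof (intro conjI impI allI)
    fix wanda_first
    assume "even d \<or> (d > 1 \<and> cube_free N) \<or>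
      (d > 3 \<and> (\<exists>N2. odd N2 \<and> cube_free N2 \<and> N = 16 * N2))"
    then have "nora_wins N d True"
      using nora_wins_first_odd_if_blockable assms(2,3) odd by blast
    then show "last_player_wins N d wanda_first"
      using second odd unfolding last_player_wins_def by (cases wanda_first) auto
  next
    fix wanda_first
    assume "\<not> (even d \<or> (d > 1 \<and> cube_free N) \<or>
      (d > 3 \<and> (\<exists>N2. odd N2 \<and> cube_free N2 \<and> N = 16 * N2)))"
    then have "wanda_wins N d True"
      using wanda_wins_first_odd_if_not_blockable assms(2) odd by blast
    then show "wanda_wins N d wanda_first"
      using second by (cases wanda_first) auto
  qed
qed

end
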